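(* In the setting described in the context, if $m\in S$ then $g_m\in\widetilde{I}$.
   Context: $\Phi$ is a commutative ring with unity $1\ne0$, regarded as a differential ring with the commuting derivations $\delta_1,\delta_2$ acting as zero. $S\subseteq\mathbb{N}$ is recursively enumerable and $M$ is a two-tape acyclic Minsky machine with states $q_0,\ldots,q_n$ ($q_0$ terminal) such that for every $x\in\mathbb{N}$, starting at configuration $[1,2^{2^x},0]$, $M$ reaches $[0,1,0]$ in finitely many steps if $x\in S$ and operates infinitely if $x\notin S$. Minsky machine conventions: two tapes infinite to the right with cells $0,1,2,\ldots$; cell $0$ contains $1$, all others $0$; a configuration $[i,a,b]$ means state $q_i$, head at cell $a$ of tape 1 and cell $b$ of tape 2. Commands are $q_i\varepsilon\sigma\to q_jT_\alpha T_\beta$ with $1\le i\le n$, $0\le j\le n$, $\varepsilon,\sigma\in\{0,1\}$, $\alpha,\beta\in\{-1,0,1\}$, $\alpha\ge0$ if $\varepsilon=1$, $\beta\ge0$ if $\sigma=1$, at most one per triple $(i,\varepsilon,\sigma)$; such a command applies to $[i,a,b]$ when ($\varepsilon=1$ iff $a=0$) and ($\sigma=1$ iff $b=0$), producing $[j,a+\alpha,b+\beta]$. Acyclic means no configuration recurs after a positive number of steps. $A=\Phi\{x_1,x_2,q_0,\ldots,q_n\}$ is the differential polynomial ring w.r.t. $\delta_1,\delta_2$ (polynomial ring in independent variables $\delta_1^a\delta_2^b(y)$, $y\in\{x_1,x_2,q_0,\ldots,q_n\}$, $\delta_1,\delta_2$ raising the corresponding exponent). $J$ is the differential ideal generated by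 $\delta_1(x_2),\delta_2(x_1)$, and $B=A/J$. For each command of $M$, $g(i,\varepsilon,\sigma)$ is the image in $B$ of $x_1^{\varepsilon}x_2^{\sigma}\delta_1^{1-\varepsilon}\delta_2^{1-\sigma}(q_i)-x_1^{\varepsilon}x_2^{\sigma}\delta_1^{1-\varepsilon+\alpha}\delta_2^{1-\sigma+\beta}(q_j)$; $\widetilde{I}$ is the differential ideal of $B$ generated by all $g(i,\varepsilon,\sigma)$; and $g_m$ is the image in $B$ of $x_1x_2\delta_1^{2^{2^m}}(q_1)-x_1x_2\delta_1(q_0)$. *)

theory Defs
  imports "HOL-Library.Poly_Mapping" "HOL-Algebra.QuotRing"
begin

text \<open>A machine with states q0..qn is a partial map from (i, eps, sigma) to (j, alpha, beta),
  where eps = True means the symbol 1 (i.e. head at cell 0) on tape 1, likewise sigma for tape 2.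
  Representing it as a partial function encodes "at most one command per triple".\<close>

type_synonym minsky = "nat \<Rightarrow> bool \<Rightarrow> bool \<Rightarrow> (nat \<times> int \<times> int) option"

definition minsky_wf :: "nat \<Rightarrow> minsky \<Rightarrow> bool" where
  "minsky_wf n M \<longleftrightarrow>
     (\<forall>i e s. (i < 1 \<or> n < i) \<longrightarrow> M i e s = None) \<and>
     (\<forall>i e s j \<alpha> \<beta>. M i e s = Some (j, \<alpha>, \<beta>) \<longrightarrow>
        j \<le> n \<and> \<alpha> \<in> {-1, 0, 1} \<and> \<beta> \<in> {-1, 0, 1} \<and> (e \<longrightarrow> \<alpha> \<ge> 0) \<and> (s \<longrightarrow> \<beta> \<ge> 0))"

definition mstep :: "minsky \<Rightarrow> nat \<times> nat \<times> nat \<Rightarrow> nat \<times> nat \<times> nat \<Rightarrow> bool" where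
  "mstep M c c' \<longleftrightarrow> (case c of (i, a, b) \<Rightarrow> case c' of (j, a', b') \<Rightarrow>
     (\<exists>\<alpha> \<beta>. M i (a = 0) (b = 0) = Some (j, \<alpha>, \<beta>) \<and>
        int a' = int a + \<alpha> \<and> int b' = int b + \<beta>))"

definition minsky_acyclic :: "minsky \<Rightarrow> bool" where
  "minsky_acyclic M \<longleftrightarrow> (\<forall>c. \<not> (mstep M)\<^sup>+\<^sup>+ c c)"

definition reaches :: "minsky \<Rightarrow> nat \<times> nat \<times> nat \<Rightarrow> nat \<times> nat \<times> nat \<Rightarrow> bool" where
  "reaches M c c' \<longleftrightarrow> (mstep M)\<^sup>*\<^sup>* c c'"

definition runs_forever :: "minsky \<Rightarrow> nat \<times> nat \<times> nat \<Rightarrow> bool" where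
  "runs_forever M c \<longleftrightarrow> (\<forall>c'. (mstep M)\<^sup>*\<^sup>* c c' \<longrightarrow> (\<exists>c''. mstep M c' c''))"

datatype dbase = X1 | X2 | Q nat
datatype der = D1 | D2

text \<open>(y, a, b) stands for the differential variable delta1^a delta2^b (y).\<close>
type_synonym dvar = "dbase \<times> nat \<times> nat"
type_synonym 'a dpoly = "(dvar \<Rightarrow>\<^sub>0 nat) \<Rightarrow>\<^sub>0 'a"

definition Var :: "dvar \<Rightarrow> 'a::comm_ring_1 dpoly" where
  "Var v = Poly_Mapping.single (Poly_Mapping.single v 1) 1"

fun sh :: "der \<Rightarrow> dvar \<Rightarrow> dvar" where
  "sh D1 (y, a, b) = (y, Suc a, b)"
| "sh D2 (y, a, b) = (y, a, Suc b)"

text \<open>The derivation: zero on coefficients, Leibniz rule, sending the variable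
  (y,a,b) to its shift. Explicitly, on a monomial mu it is
  sum over v of mu(v) * (mu - v + sh v).\<close>
definition deriv :: "der \<Rightarrow> 'a::comm_ring_1 dpoly \<Rightarrow> 'a dpoly" where
  "deriv d p = sum (\<lambda>\<mu>. sum (\<lambda>v.
      Poly_Mapping.single (\<mu> - Poly_Mapping.single v 1 + Poly_Mapping.single (sh d v) 1)
        (of_nat (Poly_Mapping.lookup \<mu> v) * Poly_Mapping.lookup p \<mu>)) (Poly_Mapping.keys \<mu>))
      (Poly_Mapping.keys p)"

fun valid_var :: "nat \<Rightarrow> dvar \<Rightarrow> bool" where
  "valid_var n (Q i, _, _) = (i \<le> n)"
| "valid_var n _ = True"

definition A_ring :: "nat \<Rightarrow> ('a::comm_ring_1 dpoly) ring" where
  "A_ring n = \<lparr>carrier = {p. \<forall>\<mu>\<in>Poly_Mapping.keys p. \<forall>v\<in>Poly_Mapping.keys \<mu>. valid_var n v},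
               monoid.mult = (*), one = 1, zero = 0, add = (+)\<rparr>"

definition diff_ideal_gen :: "('b, 'c) ring_scheme \<Rightarrow> (der \<Rightarrow> 'b \<Rightarrow> 'b) \<Rightarrow> 'b set \<Rightarrow> 'b set" where
  "diff_ideal_gen R D G = \<Inter>{I. ideal I R \<and> G \<subseteq> I \<and> (\<forall>d. \<forall>x\<in>I. D d x \<in> I)}"

definition dop :: "nat \<Rightarrow> nat \<Rightarrow> dbase \<Rightarrow> 'a::comm_ring_1 dpoly" where
  "dop a b y = (deriv D1 ^^ a) ((deriv D2 ^^ b) (Var (y, 0, 0)))"

definition J_ideal :: "nat \<Rightarrow> ('a::comm_ring_1 dpoly) set" where
  "J_ideal n = diff_ideal_gen (A_ring n) deriv {deriv D1 (Var (X2, 0, 0)), deriv D2 (Var (X1, 0, 0))}"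

definition B_ring :: "nat \<Rightarrow> ('a::comm_ring_1 dpoly) set ring" where
  "B_ring n = A_ring n Quot J_ideal n"

text \<open>Induced derivations on B = A/J: the class of delta(x) for x in the class X.\<close>
definition derivB :: "nat \<Rightarrow> der \<Rightarrow> ('a::comm_ring_1 dpoly) set \<Rightarrow> 'a dpoly set" where
  "derivB n d X = J_ideal n <+>\<^bsub>A_ring n\<^esub> (deriv d ` X)"

definition classB :: "nat \<Rightarrow> 'a::comm_ring_1 dpoly \<Rightarrow> 'a dpoly set" where
  "classB n p = J_ideal n +>\<^bsub>A_ring n\<^esub> p"

definition g_lift :: "minsky \<Rightarrow> nat \<Rightarrow> bool \<Rightarrow> bool \<Rightarrow> 'a::comm_ring_1 dpoly" where
  "g_lift M i e s = (case M i e s of None \<Rightarrow> 0 | Some (j, \<alpha>, \<beta>) \<Rightarrow>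
      Var (X1, 0, 0) ^ of_bool e * Var (X2, 0, 0) ^ of_bool s * dop (1 - of_bool e) (1 - of_bool s) (Q i)
    - Var (X1, 0, 0) ^ of_bool e * Var (X2, 0, 0) ^ of_bool s
        * dop (nat (1 - of_bool e + \<alpha>)) (nat (1 - of_bool s + \<beta>)) (Q j))"

definition I_tilde :: "nat \<Rightarrow> minsky \<Rightarrow> ('a::comm_ring_1 dpoly) set set" where
  "I_tilde n M = diff_ideal_gen (B_ring n) (derivB n)
     {classB n (g_lift M i e s) | i e s. M i e s \<noteq> None}"

definition g_m :: "nat \<Rightarrow> nat \<Rightarrow> ('a::comm_ring_1 dpoly) set" where
  "g_m n m = classB n (Var (X1, 0, 0) * Var (X2, 0, 0) * dop (2 ^ 2 ^ m) 0 (Q 1)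
                      - Var (X1, 0, 0) * Var (X2, 0, 0) * dop 1 0 (Q 0))"

end

theory Submission
  imports Defs
begin

text \<open>
  The configuration [i, a, b] is encoded by the monomial x1 x2 \<delta>1^a \<delta>2^b (q_i). Modulo J we have
  \<delta>1(x2) = \<delta>2(x1) = 0, so the Leibniz rule shows that \<delta>1 shifts both terms of a generator
  g(i, \<epsilon>, \<sigma>) whose prefactor does not contain x1 (i.e. \<epsilon> = 0, the first head is off cell 0), and
  similarly for \<delta>2. Applying \<delta>1^(a-1) and \<delta>2^(b-1) where allowed and multiplying by the missing
  factors of x1 x2 turns the generator of the command used in the step [i, a, b] \<rightarrow> [j, a', b'] into
  the difference of the encodings of the two configurations. Summing along the halting run from
  [1, 2^2^m, 0] to [0, 1, 0] gives g_m.
\<close>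

lemma poly_mapping_sum_single:
  "p = (\<Sum>\<mu>\<in>Poly_Mapping.keys p. Poly_Mapping.single \<mu> (Poly_Mapping.lookup p \<mu>))"
  by (rule poly_mapping_eqI) (simp add: lookup_sum lookup_single when_def in_keys_iff)

lemma deriv_single:
  fixes c :: "'a::comm_ring_1"
  assumes "finite K" "Poly_Mapping.keys \<mu> \<subseteq> K"
  shows "deriv d (Poly_Mapping.single \<mu> c) =
    (\<Sum>v\<in>K. Poly_Mapping.single (\<mu> - Poly_Mapping.single v 1 + Poly_Mapping.single (sh d v) 1)
                (of_nat (Poly_Mapping.lookup \<mu> v) * c))"
proof -
  have "deriv d (Poly_Mapping.single \<mu> c) =
    (\<Sum>v\<in>Poly_Mapping.keys \<mu>. Poly_Mapping.single (\<mu> - Poly_Mapping.single v 1 + Poly_Mapping.single (sh d v) 1)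
                (of_nat (Poly_Mapping.lookup \<mu> v) * c))"
    by (simp add: deriv_def)
  also have "\<dots> = (\<Sum>v\<in>K. Poly_Mapping.single (\<mu> - Poly_Mapping.single v 1 + Poly_Mapping.single (sh d v) 1)
                (of_nat (Poly_Mapping.lookup \<mu> v) * c))"
    using assms by (intro sum.mono_neutral_left) (auto simp: in_keys_iff)
  finally show ?thesis .
qed

lemma deriv_expand:
  assumes "finite K" "Poly_Mapping.keys p \<subseteq> K"
  shows "deriv d p = (\<Sum>\<mu>\<in>K. deriv d (Poly_Mapping.single \<mu> (Poly_Mapping.lookup p \<mu>)))"
proof -
  have "deriv d p = (\<Sum>\<mu>\<in>Poly_Mapping.keys p. deriv d (Poly_Mapping.single \<mu> (Poly_Mapping.lookup p \<mu>)))"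
    unfolding deriv_def by (intro sum.cong refl) (simp add: deriv_single)
  also have "\<dots> = (\<Sum>\<mu>\<in>K. deriv d (Poly_Mapping.single \<mu> (Poly_Mapping.lookup p \<mu>)))"
    using assms by (intro sum.mono_neutral_left) (auto simp: in_keys_iff deriv_def)
  finally show ?thesis .
qed

lemma deriv_zero [simp]: "deriv d 0 = 0"
  by (simp add: deriv_def)

lemma deriv_add: "deriv d (p + q) = deriv d p + deriv d q"
proof -
  let ?K = "Poly_Mapping.keys p \<union> Poly_Mapping.keys q"
  have single_add: "deriv d (Poly_Mapping.single \<mu> (a + b)) =
      deriv d (Poly_Mapping.single \<mu> a) + deriv d (Poly_Mapping.single \<mu> b)" for \<mu> a b
    unfolding deriv_single[OF finite_keys subset_refl] by (simp add: distrib_left single_add sum.distrib)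
  show ?thesis
    by (simp add: deriv_expand[of ?K] keys_add lookup_add single_add sum.distrib)
qed

lemma deriv_diff: "deriv d (p - q) = deriv d p - deriv d q"
  by (metis add_diff_cancel deriv_add diff_add_cancel)

lemma deriv_sum: "deriv d (\<Sum>i\<in>A. f i) = (\<Sum>i\<in>A. deriv d (f i))"
  by (induction A rule: infinite_finite_induct) (simp_all add: deriv_add)

lemma poly_mapping_add_minus_single:
  fixes \<mu> \<nu> :: "'b \<Rightarrow>\<^sub>0 nat"
  assumes "v \<in> Poly_Mapping.keys \<mu>"
  shows "\<mu> + \<nu> - Poly_Mapping.single v 1 = \<mu> - Poly_Mapping.single v 1 + \<nu>"
  using assms by (intro poly_mapping_eqI) (auto simp: lookup_add lookup_minus lookup_single when_def in_keys_iff)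

lemma deriv_mult_single:
  fixes a b :: "'a::comm_ring_1"
  shows "deriv d (Poly_Mapping.single \<mu> a * Poly_Mapping.single \<nu> b) =
    deriv d (Poly_Mapping.single \<mu> a) * Poly_Mapping.single \<nu> b + Poly_Mapping.single \<mu> a * deriv d (Poly_Mapping.single \<nu> b)"
proof -
  let ?K = "Poly_Mapping.keys \<mu> \<union> Poly_Mapping.keys \<nu>"
  let ?s = "\<lambda>\<kappa> v. \<kappa> - Poly_Mapping.single v 1 + Poly_Mapping.single (sh d v) 1"
  have "Poly_Mapping.single (?s (\<mu> + \<nu>) v) (of_nat (Poly_Mapping.lookup (\<mu> + \<nu>) v) * (a * b))
      = Poly_Mapping.single (?s \<mu> v + \<nu>) (of_nat (Poly_Mapping.lookup \<mu> v) * a * b)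
      + Poly_Mapping.single (\<mu> + ?s \<nu> v) (a * (of_nat (Poly_Mapping.lookup \<nu> v) * b))" for v
  proof -
    have "?s (\<mu> + \<nu>) v = ?s \<mu> v + \<nu>" if "v \<in> Poly_Mapping.keys \<mu>"
      unfolding poly_mapping_add_minus_single[OF that] by (simp add: ac_simps)
    moreover have "?s (\<mu> + \<nu>) v = \<mu> + ?s \<nu> v" if "v \<in> Poly_Mapping.keys \<nu>"
      unfolding add.commute[of \<mu> \<nu>] poly_mapping_add_minus_single[OF that] by (simp add: ac_simps)
    ultimately show ?thesis
      by (cases "v \<in> Poly_Mapping.keys \<mu>"; cases "v \<in> Poly_Mapping.keys \<nu>")
        (simp_all add: lookup_add in_keys_iff algebra_simps flip: single_add)
  qed
  then show ?thesis
    by (simp add: mult_single deriv_single[of ?K] sum_distrib_left sum_distrib_right sum.distrib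
        keys_add[THEN subset_trans])
qed

lemma deriv_mult: "deriv d (p * q) = deriv d p * q + p * deriv d (q :: 'a::comm_ring_1 dpoly)"
proof -
  let ?m = "\<lambda>r \<mu>. Poly_Mapping.single \<mu> (Poly_Mapping.lookup r \<mu>)"
  have expand: "deriv d r = (\<Sum>\<mu>\<in>Poly_Mapping.keys r. deriv d (?m r \<mu>))" for r :: "'a dpoly"
    by (rule deriv_expand) simp_all
  have sums: "r = (\<Sum>\<mu>\<in>Poly_Mapping.keys r. ?m r \<mu>)" for r :: "'a dpoly"
    by (rule poly_mapping_sum_single)
  have "p * q = (\<Sum>\<mu>\<in>Poly_Mapping.keys p. \<Sum>\<nu>\<in>Poly_Mapping.keys q. ?m p \<mu> * ?m q \<nu>)"
    by (subst sum_product[symmetric]) (simp only: flip: sums)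
  then have "deriv d (p * q) = (\<Sum>\<mu>\<in>Poly_Mapping.keys p. \<Sum>\<nu>\<in>Poly_Mapping.keys q.
      deriv d (?m p \<mu>) * ?m q \<nu> + ?m p \<mu> * deriv d (?m q \<nu>))"
    by (simp only: deriv_sum deriv_mult_single)
  also have "\<dots> = (\<Sum>\<mu>\<in>Poly_Mapping.keys p. deriv d (?m p \<mu>)) * (\<Sum>\<nu>\<in>Poly_Mapping.keys q. ?m q \<nu>)
      + (\<Sum>\<mu>\<in>Poly_Mapping.keys p. ?m p \<mu>) * (\<Sum>\<nu>\<in>Poly_Mapping.keys q. deriv d (?m q \<nu>))"
    by (simp only: sum_product sum.distrib)
  also have "\<dots> = deriv d p * q + p * deriv d q"
    by (simp only: flip: sums expand)
  finally show ?thesis .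
qed

lemma deriv_Var: "deriv d (Var v) = Var (sh d v)"
  by (simp add: Var_def deriv_single[of "{v}"])

lemma deriv_one [simp]: "deriv d 1 = 0"
  by (simp add: deriv_def)

lemma dop_Var: "dop a b y = Var (y, a, b)"
proof -
  have D2: "(deriv D2 ^^ b) (Var (y, 0, 0)) = Var (y, 0, b)"
    by (induction b) (simp_all add: deriv_Var)
  have D1: "(deriv D1 ^^ a) (Var (y, 0, b)) = Var (y, a, b)"
    by (induction a) (simp_all add: deriv_Var)
  show ?thesis
    by (simp add: dop_def D1 D2)
qed

lemma valid_var_sh [simp]: "valid_var n (sh d v) = valid_var n v"
  by (cases d; cases v; rename_tac y a b; case_tac y; simp)

lemma valid_var_funpow_sh [simp]: "valid_var n ((sh d ^^ k) v) = valid_var n v"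
  by (induction k) auto

lemma funpow_sh_D1 [simp]: "(sh D1 ^^ k) (y, a, b) = (y, a + k, b)"
  by (induction k) auto

lemma funpow_sh_D2 [simp]: "(sh D2 ^^ k) (y, a, b) = (y, a, b + k)"
  by (induction k) auto

lemma carrier_A_ring:
  "p \<in> carrier (A_ring n) \<longleftrightarrow> (\<forall>\<mu>\<in>Poly_Mapping.keys p. \<forall>v\<in>Poly_Mapping.keys \<mu>. valid_var n v)"
  by (simp add: A_ring_def)

lemma A_ring_ops [simp]:
  "x \<oplus>\<^bsub>A_ring n\<^esub> y = x + y" "x \<otimes>\<^bsub>A_ring n\<^esub> y = x * y" "\<zero>\<^bsub>A_ring n\<^esub> = 0" "\<one>\<^bsub>A_ring n\<^esub> = 1"
  by (simp_all add: A_ring_def)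

lemma A_ring_add_closed:
  "p \<in> carrier (A_ring n) \<Longrightarrow> q \<in> carrier (A_ring n) \<Longrightarrow> p + q \<in> carrier (A_ring n)"
  unfolding carrier_A_ring by (meson UnE keys_add subsetD)

lemma A_ring_diff_closed:
  "p \<in> carrier (A_ring n) \<Longrightarrow> q \<in> carrier (A_ring n) \<Longrightarrow> p - q \<in> carrier (A_ring n)"
  unfolding carrier_A_ring by (meson UnE keys_diff subsetD)

lemma A_ring_uminus_closed: "p \<in> carrier (A_ring n) \<Longrightarrow> - p \<in> carrier (A_ring n)"
  by (simp add: carrier_A_ring)

lemma A_ring_mult_closed:
  assumes "p \<in> carrier (A_ring n)" "q \<in> carrier (A_ring n)"
  shows "p * q \<in> carrier (A_ring n)"
  unfolding carrier_A_ring
proof (intro ballI)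
  fix \<kappa> v assume "\<kappa> \<in> Poly_Mapping.keys (p * q)" and v: "v \<in> Poly_Mapping.keys \<kappa>"
  then obtain \<mu> \<nu> where "\<kappa> = \<mu> + \<nu>" "\<mu> \<in> Poly_Mapping.keys p" "\<nu> \<in> Poly_Mapping.keys q"
    using keys_mult by blast
  with v assms show "valid_var n v"
    by (auto simp: carrier_A_ring in_keys_iff lookup_add)
qed

lemma A_ring_one_closed: "1 \<in> carrier (A_ring n)"
  by (simp add: carrier_A_ring)

lemma A_ring_Var_closed: "valid_var n v \<Longrightarrow> Var v \<in> carrier (A_ring n)"
  by (simp add: carrier_A_ring Var_def)

lemma A_ring_deriv_closed:
  assumes "p \<in> carrier (A_ring n)"
  shows "deriv d p \<in> carrier (A_ring n)"
  unfolding carrier_A_ring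
proof (intro ballI)
  fix \<kappa> x assume "\<kappa> \<in> Poly_Mapping.keys (deriv d p)" and x: "x \<in> Poly_Mapping.keys \<kappa>"
  then obtain \<mu> v where "\<mu> \<in> Poly_Mapping.keys p" "v \<in> Poly_Mapping.keys \<mu>"
      and "\<kappa> = \<mu> - Poly_Mapping.single v 1 + Poly_Mapping.single (sh d v) 1"
    unfolding deriv_def by (fastforce dest!: subsetD[OF keys_sum] split: if_splits)
  with x have "x \<in> Poly_Mapping.keys \<mu> \<or> x = sh d v"
    by (auto simp: in_keys_iff lookup_add lookup_minus lookup_single when_def split: if_splits)
  with assms \<open>\<mu> \<in> _\<close> \<open>v \<in> _\<close> show "valid_var n x"
    by (auto simp: carrier_A_ring)
qed

lemma A_ring_cring: "cring (A_ring n :: 'a::comm_ring_1 dpoly ring)"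
proof (rule cringI)
  show "abelian_group (A_ring n :: 'a dpoly ring)"
  proof (rule abelian_groupI)
    fix x assume "x \<in> carrier (A_ring n :: 'a dpoly ring)"
    then show "\<exists>y\<in>carrier (A_ring n). y \<oplus>\<^bsub>A_ring n\<^esub> x = \<zero>\<^bsub>A_ring n\<^esub>"
      by (intro bexI[of _ "- x"]) (simp_all add: A_ring_uminus_closed)
  qed (simp_all add: A_ring_add_closed algebra_simps, simp add: carrier_A_ring)
  show "Group.comm_monoid (A_ring n :: 'a dpoly ring)"
    by (rule comm_monoidI) (simp_all add: A_ring_mult_closed algebra_simps, simp add: carrier_A_ring)
qed (simp_all add: distrib_right)

lemma J_ideal_eq_Inter:
  "J_ideal n = \<Inter>{I. ideal I (A_ring n) \<and> deriv D1 (Var (X2, 0, 0)) \<in> I \<and> deriv D2 (Var (X1, 0, 0)) \<in> I \<and>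
                     (\<forall>d. \<forall>x\<in>I. deriv d x \<in> I)}"
  by (simp add: J_ideal_def diff_ideal_gen_def)

lemma J_ideal_ideal: "ideal (J_ideal n) (A_ring n :: 'a::comm_ring_1 dpoly ring)"
proof -
  interpret cring "A_ring n :: 'a dpoly ring" by (rule A_ring_cring)
  let ?S = "{I. ideal I (A_ring n :: 'a dpoly ring) \<and> deriv D1 (Var (X2, 0, 0)) \<in> I \<and>
                deriv D2 (Var (X1, 0, 0)) \<in> I \<and>
                (\<forall>d. \<forall>x\<in>I. deriv d x \<in> I)}"
  have "carrier (A_ring n) \<in> ?S"
    using oneideal by (simp add: A_ring_deriv_closed A_ring_Var_closed)
  then show ?thesis
    unfolding J_ideal_eq_Inter by (intro i_Intersect) auto
qed

lemma J_ideal_deriv_closed: "x \<in> J_ideal n \<Longrightarrow> deriv d x \<in> J_ideal n"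
  unfolding J_ideal_eq_Inter by auto

lemma J_ideal_generators: "deriv D1 (Var (X2, 0, 0)) \<in> J_ideal n" "deriv D2 (Var (X1, 0, 0)) \<in> J_ideal n"
  unfolding J_ideal_eq_Inter by auto

lemma J_ideal_add_closed: "x \<in> J_ideal n \<Longrightarrow> y \<in> J_ideal n \<Longrightarrow> x + y \<in> J_ideal n"
  using additive_subgroup.a_closed[OF ideal.axioms(1)[OF J_ideal_ideal]] by simp

lemma J_ideal_zero: "0 \<in> J_ideal n"
  using additive_subgroup.zero_closed[OF ideal.axioms(1)[OF J_ideal_ideal]] by simp

lemma J_ideal_mult_closed: "x \<in> J_ideal n \<Longrightarrow> y \<in> carrier (A_ring n) \<Longrightarrow> x * y \<in> J_ideal n"
  using ideal.I_r_closed[OF J_ideal_ideal] by simp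

lemma J_ideal_diff_closed: "x \<in> J_ideal n \<Longrightarrow> y \<in> J_ideal n \<Longrightarrow> x - y \<in> J_ideal n"
  using ideal.I_r_closed[OF J_ideal_ideal, of y n "- 1"] J_ideal_add_closed[of x n "- y"]
  by (simp add: A_ring_uminus_closed carrier_A_ring)

lemma classB_eq_image: "classB n p = (\<lambda>j. j + p) ` J_ideal n"
  by (auto simp: classB_def a_r_coset_def r_coset_def A_ring_def)

lemma classB_eqI: "p - q \<in> J_ideal n \<Longrightarrow> classB n p = classB n q"
  unfolding classB_eq_image
proof (intro equalityI subsetI)
  fix x assume pq: "p - q \<in> J_ideal n"
  { assume "x \<in> (\<lambda>j. j + p) ` J_ideal n"
    then obtain j where "j \<in> J_ideal n" "x = (j + (p - q)) + q" by auto
    with J_ideal_add_closed pq show "x \<in> (\<lambda>j. j + q) ` J_ideal n" by blast }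
  { assume "x \<in> (\<lambda>j. j + q) ` J_ideal n"
    then obtain j where "j \<in> J_ideal n" "x = (j - (p - q)) + p" by auto
    with J_ideal_diff_closed pq show "x \<in> (\<lambda>j. j + p) ` J_ideal n" by blast }
qed

lemma classB_zero: "classB n 0 = J_ideal n"
  by (simp add: classB_eq_image)

lemma classB_closed: "p \<in> carrier (A_ring n) \<Longrightarrow> classB n p \<in> carrier (B_ring n)"
  using ring_hom_closed[OF ideal.rcos_ring_hom[OF J_ideal_ideal]]
  by (simp add: classB_def B_ring_def)

lemma classB_mult:
  "p \<in> carrier (A_ring n) \<Longrightarrow> q \<in> carrier (A_ring n) \<Longrightarrow>
   classB n p \<otimes>\<^bsub>B_ring n\<^esub> classB n q = classB n (p * q)"
  using ideal.rcoset_mult_add[OF J_ideal_ideal, of p n q]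
  by (simp add: classB_def B_ring_def FactRing_def)

lemma classB_add: "classB n p \<oplus>\<^bsub>B_ring n\<^esub> classB n q = classB n (p + q)"
proof -
  have "(\<Union>x\<in>classB n p. \<Union>y\<in>classB n q. {x + y}) = classB n (p + q)"
  proof (intro equalityI subsetI)
    fix x assume "x \<in> (\<Union>x\<in>classB n p. \<Union>y\<in>classB n q. {x + y})"
    then obtain j1 j2 where "j1 \<in> J_ideal n" "j2 \<in> J_ideal n" "x = (j1 + j2) + (p + q)"
      unfolding classB_eq_image by (auto simp: algebra_simps)
    with J_ideal_add_closed show "x \<in> classB n (p + q)"
      unfolding classB_eq_image by blast
  next
    fix x assume "x \<in> classB n (p + q)"
    then obtain j where "j \<in> J_ideal n" "x = (j + p) + (0 + q)"
      unfolding classB_eq_image by (auto simp: algebra_simps)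
    with J_ideal_zero show "x \<in> (\<Union>x\<in>classB n p. \<Union>y\<in>classB n q. {x + y})"
      unfolding classB_eq_image by blast
  qed
  then show ?thesis
    by (simp add: B_ring_def FactRing_def set_add_def set_mult_def)
qed

lemma derivB_classB: "derivB n d (classB n p) = classB n (deriv d p)"
proof -
  have "(\<Union>j\<in>J_ideal n. \<Union>y\<in>classB n p. {j + deriv d y}) = classB n (deriv d p)"
  proof (intro equalityI subsetI)
    fix x assume "x \<in> (\<Union>j\<in>J_ideal n. \<Union>y\<in>classB n p. {j + deriv d y})"
    then obtain j1 j2 where "j1 \<in> J_ideal n" "j2 \<in> J_ideal n" "x = (j1 + deriv d j2) + deriv d p"
      unfolding classB_eq_image by (auto simp: deriv_add algebra_simps)
    with J_ideal_add_closed J_ideal_deriv_closed show "x \<in> classB n (deriv d p)"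
      unfolding classB_eq_image by blast
  next
    fix x assume "x \<in> classB n (deriv d p)"
    then obtain j where "j \<in> J_ideal n" "x = j + deriv d (0 + p)"
      unfolding classB_eq_image by auto
    with J_ideal_zero show "x \<in> (\<Union>j\<in>J_ideal n. \<Union>y\<in>classB n p. {j + deriv d y})"
      unfolding classB_eq_image by blast
  qed
  then show ?thesis
    by (simp add: derivB_def set_add_def set_mult_def)
qed

definition config_poly :: "nat \<times> nat \<times> nat \<Rightarrow> 'a::comm_ring_1 dpoly" where
  "config_poly = (\<lambda>(i, a, b). Var (X1, 0, 0) * Var (X2, 0, 0) * Var (Q i, a, b))"

lemma X1_X2_monomial_closed:
  "Var (X1, 0, 0) ^ of_bool e * Var (X2, 0, 0) ^ of_bool s \<in> carrier (A_ring n)"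
  by (cases e; cases s) (simp_all add: A_ring_mult_closed A_ring_Var_closed A_ring_one_closed)

lemma mstep_command:
  assumes "minsky_wf n M" "mstep M (i, a, b) (j, a', b')"
  obtains \<alpha> \<beta> where "M i (a = 0) (b = 0) = Some (j, \<alpha>, \<beta>)" "i \<le> n" "j \<le> n"
    "1 - of_bool (a = 0) + (a - 1) = a" "nat (1 - of_bool (a = 0) + \<alpha>) + (a - 1) = a'"
    "1 - of_bool (b = 0) + (b - 1) = b" "nat (1 - of_bool (b = 0) + \<beta>) + (b - 1) = b'"
proof -
  obtain \<alpha> \<beta> where cmd: "M i (a = 0) (b = 0) = Some (j, \<alpha>, \<beta>)"
    and a': "int a' = int a + \<alpha>" and b': "int b' = int b + \<beta>"
    using assms(2) by (auto simp: mstep_def)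
  have "i \<le> n" "j \<le> n" and "\<alpha> \<in> {-1, 0, 1}" "a = 0 \<Longrightarrow> \<alpha> \<ge> 0"
    and "\<beta> \<in> {-1, 0, 1}" "b = 0 \<Longrightarrow> \<beta> \<ge> 0"
    using assms(1) cmd unfolding minsky_wf_def by (fastforce simp: not_less[symmetric])+
  with cmd a' b' show ?thesis
    by (intro that[of \<alpha> \<beta>]) auto
qed

locale command_diff_ideal =
  fixes n :: nat and M :: minsky and I :: "'a::comm_ring_1 dpoly set set"
  assumes wf: "minsky_wf n M"
    and ideal: "ideal I (B_ring n)"
    and commands: "\<And>i e s. M i e s \<noteq> None \<Longrightarrow> classB n (g_lift M i e s) \<in> I"
    and deriv_closed: "\<And>d x. x \<in> I \<Longrightarrow> derivB n d x \<in> I"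
begin

lemma classB_add_mem:
  assumes "classB n p \<in> I" "classB n q \<in> I"
  shows "classB n (p + q) \<in> I"
  using additive_subgroup.a_closed[OF ideal.axioms(1)[OF ideal] assms] by (simp add: classB_add)

lemma classB_mult_mem:
  assumes "p \<in> carrier (A_ring n)" "q \<in> carrier (A_ring n)" "classB n q \<in> I"
  shows "classB n (p * q) \<in> I"
  using ideal.I_l_closed[OF ideal assms(3) classB_closed[OF assms(1)]] by (simp add: classB_mult assms)

lemma classB_deriv_mem: "classB n p \<in> I \<Longrightarrow> classB n (deriv d p) \<in> I"
  using deriv_closed[of "classB n p" d] by (simp add: derivB_classB)

lemma classB_zero_mem: "classB n 0 \<in> I"
  using additive_subgroup.zero_closed[OF ideal.axioms(1)[OF ideal]]
  by (simp add: classB_zero B_ring_def FactRing_def)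

lemma classB_shift_mem:
  assumes p: "p \<in> carrier (A_ring n)" "deriv d p \<in> J_ideal n"
    and uw: "valid_var n u" "valid_var n w"
    and mem: "classB n (p * (Var u - Var w)) \<in> I"
  shows "classB n (p * (Var ((sh d ^^ k) u) - Var ((sh d ^^ k) w))) \<in> I"
proof (induction k)
  case (Suc k)
  let ?u = "(sh d ^^ k) u" and ?w = "(sh d ^^ k) w"
  have diff: "Var ?u - Var ?w \<in> carrier (A_ring n)"
    using uw by (simp add: A_ring_diff_closed A_ring_Var_closed)
  have "deriv d (p * (Var ?u - Var ?w)) - p * (Var (sh d ?u) - Var (sh d ?w))
      = deriv d p * (Var ?u - Var ?w)"
    by (simp add: deriv_mult deriv_diff deriv_Var)
  also have "\<dots> \<in> J_ideal n"
    using J_ideal_mult_closed[OF p(2) diff] .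
  finally have "classB n (deriv d (p * (Var ?u - Var ?w))) = classB n (p * (Var (sh d ?u) - Var (sh d ?w)))"
    by (rule classB_eqI)
  with classB_deriv_mem[OF Suc.IH, of d] show ?case
    by simp
qed (simp add: mem)

lemma mstep_mem:
  assumes "mstep M (i, a, b) (j, a', b')"
  shows "classB n (config_poly (i, a, b) - config_poly (j, a', b')) \<in> I"
proof -
  define e s where "e = (a = 0)" and "s = (b = 0)"
  obtain \<alpha> \<beta> where cmd: "M i e s = Some (j, \<alpha>, \<beta>)" and ij: "i \<le> n" "j \<le> n"
    and a_eq: "1 - of_bool e + (a - 1) = a" "nat (1 - of_bool e + \<alpha>) + (a - 1) = a'"
    and b_eq: "1 - of_bool s + (b - 1) = b" "nat (1 - of_bool s + \<beta>) + (b - 1) = b'"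
    using mstep_command[OF wf assms] unfolding e_def s_def .
  define p :: "'a dpoly" where "p = Var (X1, 0, 0) ^ of_bool e * Var (X2, 0, 0) ^ of_bool s"
  have p_closed: "p \<in> carrier (A_ring n)"
    unfolding p_def by (rule X1_X2_monomial_closed)
  have p_const: "\<not> e \<Longrightarrow> deriv D1 p \<in> J_ideal n" "\<not> s \<Longrightarrow> deriv D2 p \<in> J_ideal n"
    unfolding p_def by (cases e; cases s; simp add: J_ideal_generators J_ideal_zero)+
  have command: "classB n (p * (Var (Q i, 1 - of_bool e, 1 - of_bool s)
      - Var (Q j, nat (1 - of_bool e + \<alpha>), nat (1 - of_bool s + \<beta>)))) \<in> I"
    using commands[of i e s] cmd by (simp add: g_lift_def dop_Var p_def right_diff_distrib)
  have shifted_a: "classB n (p * (Var (Q i, a, 1 - of_bool s) - Var (Q j, a', nat (1 - of_bool s + \<beta>)))) \<in> I"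
  proof (cases e)
    case False
    have "classB n (p * (Var ((sh D1 ^^ (a - 1)) (Q i, 1, 1 - of_bool s))
        - Var ((sh D1 ^^ (a - 1)) (Q j, nat (1 + \<alpha>), nat (1 - of_bool s + \<beta>))))) \<in> I"
      by (rule classB_shift_mem) (use p_closed p_const command False ij in simp_all)
    with False a_eq show ?thesis
      by simp
  qed (use command a_eq in \<open>simp add: e_def\<close>)
  have "classB n (p * (Var (Q i, a, b) - Var (Q j, a', b'))) \<in> I"
  proof (cases s)
    case False
    have "classB n (p * (Var ((sh D2 ^^ (b - 1)) (Q i, a, 1))
        - Var ((sh D2 ^^ (b - 1)) (Q j, a', nat (1 + \<beta>))))) \<in> I"
      by (rule classB_shift_mem) (use p_closed p_const shifted_a False ij in simp_all)
    with False b_eq show ?thesis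
      by simp
  qed (use shifted_a b_eq in \<open>simp add: s_def\<close>)
  then have "classB n (Var (X1, 0, 0) ^ of_bool (\<not> e) * Var (X2, 0, 0) ^ of_bool (\<not> s)
      * (p * (Var (Q i, a, b) - Var (Q j, a', b')))) \<in> I"
    using ij by (intro classB_mult_mem[OF X1_X2_monomial_closed] A_ring_mult_closed p_closed
        A_ring_diff_closed A_ring_Var_closed) simp_all
  moreover have "Var (X1, 0, 0) ^ of_bool (\<not> e) * Var (X2, 0, 0) ^ of_bool (\<not> s)
      * (p * (Var (Q i, a, b) - Var (Q j, a', b'))) = config_poly (i, a, b) - config_poly (j, a', b')"
    by (cases e; cases s) (simp_all add: p_def config_poly_def algebra_simps)
  ultimately show ?thesis
    by simp
qed

lemma reaches_mem: "(mstep M)\<^sup>*\<^sup>* c c' \<Longrightarrow> classB n (config_poly c - config_poly c') \<in> I"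
proof (induction rule: rtranclp_induct)
  case (step c' c'')
  then have "classB n (config_poly c' - config_poly c'') \<in> I"
    by (cases c'; cases c'') (simp add: mstep_mem)
  from classB_add_mem[OF step.IH this] show ?case
    by simp
qed (simp add: classB_zero_mem)

end

theorem corollary2:
  fixes n :: nat and M :: minsky and S :: "nat set" and m :: nat
  assumes wf: "minsky_wf n M"
    and acyc: "minsky_acyclic M"
    and halt: "\<And>x. x \<in> S \<Longrightarrow> reaches M (1, 2 ^ 2 ^ x, 0) (0, 1, 0)"
    and loop: "\<And>x. x \<notin> S \<Longrightarrow> runs_forever M (1, 2 ^ 2 ^ x, 0)"
    and mS: "m \<in> S"
  shows "(g_m n m :: ('a::comm_ring_1 dpoly) set) \<in> I_tilde n M"
proof -
  have "(g_m n m :: 'a dpoly set) \<in> I"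
    if "ideal I (B_ring n)" "{classB n (g_lift M i e s) | i e s. M i e s \<noteq> None} \<subseteq> I"
      "\<forall>d. \<forall>x\<in>I. derivB n d x \<in> I" for I
  proof -
    interpret command_diff_ideal n M I
      by (rule command_diff_ideal.intro) (use wf that in blast)+
    have "(mstep M)\<^sup>*\<^sup>* (1, 2 ^ 2 ^ m, 0) (0, 1, 0)"
      using halt[OF mS] by (simp add: reaches_def)
    from reaches_mem[OF this] show ?thesis
      by (simp add: g_m_def dop_Var config_poly_def)
  qed
  then show ?thesis
    unfolding I_tilde_def diff_ideal_gen_def by blast
qed

end
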